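(* Consider the following downlink cell-free system. There are $M$ access points (APs), each with $N$ antennas, and $K$ single-antenna user equipments (UEs). For each UE $k\in[K]$ let $\mathcal{A}_k\subset[M]$ be its AP cluster, and for each AP $m\in[M]$ let $\mathcal{U}_m=\{k\in[K]: m\in\mathcal{A}_k\}$ be its UE group. The channel from AP $m$ to UE $k$ is $$\mathbf{h}_{m,k}=\sqrt{\beta_{m,k}N}\sum_{l=1}^{L}\sqrt{\kappa_{m,k,l}}\,g_{m,k,l}\,\mathbf{a}(\theta_{m,k,l}),$$ where $\beta_{m,k}\ge 0$, $\kappa_{m,k,l}\in[0,1]$ with $\sum_{l=1}^L\kappa_{m,k,l}=1$, the angles $\theta_{m,k,l}$ are fixed (deterministic), $\mathbf{a}(\theta)=\tfrac{1}{\sqrt N}[1,e^{j\pi\sin\theta},\dots,e^{j(N-1)\pi\sin\theta}]^T$, and the path gains $g_{m,k,l}\sim\mathcal{CN}(0,1)$ are mutually independent over all $(m,k,l)$. Each UE $k$ reports to each AP $m\in\mathcal{A}_k$ quantized path gains $\hat g_{m,k,l}=g_{m,k,l}-\Delta_{m,k,l}$ with $b_{m,k,l}\ge 0$ bits, where the quantization errors satisfy $\Delta_{m,k,l}\sim\mathcal{CN}(0,2^{-b_{m,k,l}})$ and are independent across paths and across $(m,k)$; AP $m$ forms $\hat{\mathbf{h}}_{m,k}=\sqrt{\beta_{m,k}N}\sum_{l}\sqrt{\kappa_{m,k,l}}\hat g_{m,k,l}\mathbf{a}(\theta_{m,k,l})$ and the error $\mathbf{e}_{m,k}=\mathbf{h}_{m,k}-\hat{\mathbf{h}}_{m,k}$.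 AP $m$ transmits $\mathbf{x}_m=\sum_{j\in\mathcal{U}_m}\sqrt{p_m}\,\mathbf{w}_{m,j}s_j$ with equal power $p_m=P_m/|\mathcal{U}_m|$, unit-norm zero-forcing beamformers $\mathbf{w}_{m,j}$ with $\mathbf{w}_{m,j}\perp\{\hat{\mathbf{h}}_{m,i}: i\in\mathcal{U}_m\setminus\{j\}\}$, each $\mathbf{w}_{m,j}$ being a function only of the quantized channels $\{\hat{\mathbf{h}}_{m,i}: i\in\mathcal{U}_m\setminus\{j\}\}$, and unit-power data symbols $s_j$. Define $$\mathcal{D}_k=\Big|\sum_{m\in\mathcal{A}_k}\sqrt{p_m}\,\mathbf{h}_{m,k}^\dagger\mathbf{w}_{m,k}\Big|^2,\quad \mathcal{I}^{\mathsf{SGI}}_k=\sum_{j\in[K]\setminus\{k\}}\Big|\sum_{m\in\mathcal{A}_j\cap\mathcal{A}_k}\sqrt{p_m}\,\mathbf{h}_{m,k}^\dagger\mathbf{w}_{m,j}\Big|^2,$$ $$\mathcal{I}^{\mathsf{IGI}}_k=\sum_{j\in[K]\setminus\{k\}}\Big|\sum_{m\in\mathcal{A}_j\setminus\mathcal{A}_k}\sqrt{p_m}\,\mathbf{h}_{m,k}^\dagger\mathbf{w}_{m,j}\Big|^2.$$ Then, with $\mathbb{E}_{\mathbf{h},\mathcal{C}}$ denoting expectation over the path gains and the quantization, $$\mathbb{E}_{\mathbf{h},\mathcal{C}}[\mathcal{D}_k]\le\sum_{m\in\mathcal{A}_k}p_m\beta_{m,k}N,$$ $$\mathbb{E}_{\mathbf{h},\mathcal{C}}[\mathcal{I}^{\mathsf{SGI}}_k]\le\sum_{j\in[K],\,j\ne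 k}\ \sum_{m\in\mathcal{A}_j\cap\mathcal{A}_k}p_m\beta_{m,k}N\Big[\sum_{l=1}^{L}\kappa_{m,k,l}2^{-b_{m,k,l}}\Big],$$ $$\mathbb{E}_{\mathbf{h},\mathcal{C}}[\mathcal{I}^{\mathsf{IGI}}_k]\le\sum_{j\in[K],\,j\ne k}\ \sum_{m\in\mathcal{A}_j\setminus\mathcal{A}_k}p_m\beta_{m,k}N.$$
   Context: $[n]=\{1,\dots,n\}$; $\dagger$ denotes conjugate transpose. $\mathcal{D}_k$, $\mathcal{I}^{\mathsf{SGI}}_k$, $\mathcal{I}^{\mathsf{IGI}}_k$ are the desired-signal, same-group-interference and inter-group-interference powers at UE $k$. $P_m$ is AP $m$'s transmit power budget. *)

theory Defs
  imports "HOL-Probability.Probability"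
begin

text \<open>Indices are 0-based: APs m < M, UEs k < K, paths l < L, antennas n < N.
  Vectors in C^N are functions nat => complex (entries n >= N are zero / ignored).\<close>

definition ugroup :: "nat \<Rightarrow> (nat \<Rightarrow> nat set) \<Rightarrow> nat \<Rightarrow> nat set" where
  "ugroup K A m = {k \<in> {..<K}. m \<in> A k}"

definition steer :: "nat \<Rightarrow> real \<Rightarrow> nat \<Rightarrow> complex" where
  "steer N \<theta> n = (if n < N then complex_of_real (1 / sqrt (real N)) * cis (pi * real n * sin \<theta>) else 0)"

definition mpchan :: "nat \<Rightarrow> nat \<Rightarrow> real \<Rightarrow> (nat \<Rightarrow> real) \<Rightarrow> (nat \<Rightarrow> real) \<Rightarrow> (nat \<Rightarrow> complex) \<Rightarrow> nat \<Rightarrow> complex" where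
  "mpchan N L \<beta> \<kappa> \<theta> G n =
     complex_of_real (sqrt (\<beta> * real N)) *
       (\<Sum>l<L. complex_of_real (sqrt (\<kappa> l)) * G l * steer N (\<theta> l) n)"

definition hip :: "nat \<Rightarrow> (nat \<Rightarrow> complex) \<Rightarrow> (nat \<Rightarrow> complex) \<Rightarrow> complex" where
  "hip N x y = (\<Sum>n<N. cnj (x n) * y n)"

definition cgauss :: "'w measure \<Rightarrow> real \<Rightarrow> ('w \<Rightarrow> complex) \<Rightarrow> bool" where
  "cgauss \<Omega> s2 Z \<longleftrightarrow>
     distributed \<Omega> lborel (\<lambda>\<omega>. Re (Z \<omega>)) (normal_density 0 (sqrt (s2 / 2))) \<and>
     distributed \<Omega> lborel (\<lambda>\<omega>. Im (Z \<omega>)) (normal_density 0 (sqrt (s2 / 2))) \<and>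
     prob_space.indep_var \<Omega> borel (\<lambda>\<omega>. Re (Z \<omega>)) borel (\<lambda>\<omega>. Im (Z \<omega>))"

definition sigD :: "nat \<Rightarrow> (nat \<Rightarrow> nat set) \<Rightarrow> (nat \<Rightarrow> real)
    \<Rightarrow> (nat \<Rightarrow> nat \<Rightarrow> 'w \<Rightarrow> nat \<Rightarrow> complex) \<Rightarrow> (nat \<Rightarrow> nat \<Rightarrow> 'w \<Rightarrow> nat \<Rightarrow> complex)
    \<Rightarrow> nat \<Rightarrow> 'w \<Rightarrow> real" where
  "sigD N A p h w k \<omega> =
     (cmod (\<Sum>m\<in>A k. complex_of_real (sqrt (p m)) * hip N (h m k \<omega>) (w m k \<omega>)))\<^sup>2"

definition sigSGI :: "nat \<Rightarrow> nat \<Rightarrow> (nat \<Rightarrow> nat set) \<Rightarrow> (nat \<Rightarrow> real)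
    \<Rightarrow> (nat \<Rightarrow> nat \<Rightarrow> 'w \<Rightarrow> nat \<Rightarrow> complex) \<Rightarrow> (nat \<Rightarrow> nat \<Rightarrow> 'w \<Rightarrow> nat \<Rightarrow> complex)
    \<Rightarrow> nat \<Rightarrow> 'w \<Rightarrow> real" where
  "sigSGI K N A p h w k \<omega> =
     (\<Sum>j\<in>{..<K} - {k}.
        (cmod (\<Sum>m\<in>A j \<inter> A k. complex_of_real (sqrt (p m)) * hip N (h m k \<omega>) (w m j \<omega>)))\<^sup>2)"

definition sigIGI :: "nat \<Rightarrow> nat \<Rightarrow> (nat \<Rightarrow> nat set) \<Rightarrow> (nat \<Rightarrow> real)
    \<Rightarrow> (nat \<Rightarrow> nat \<Rightarrow> 'w \<Rightarrow> nat \<Rightarrow> complex) \<Rightarrow> (nat \<Rightarrow> nat \<Rightarrow> 'w \<Rightarrow> nat \<Rightarrow> complex)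
    \<Rightarrow> nat \<Rightarrow> 'w \<Rightarrow> real" where
  "sigIGI K N A p h w k \<omega> =
     (\<Sum>j\<in>{..<K} - {k}.
        (cmod (\<Sum>m\<in>A j - A k. complex_of_real (sqrt (p m)) * hip N (h m k \<omega>) (w m j \<omega>)))\<^sup>2)"

end

(* Each of the three powers has the form |sum_m sqrt(p_m) c_m^H w_(m,j)|^2, where c_m is the channel
   h_(m,k) or, for the same-group interference, the quantization error e_(m,k): since k lies in
   U_m - {j}, zero forcing annihilates the quantized part of h_(m,k). Expanding c_m along the paths
   turns the power into |sum_(m,l) a_(m,l) cnj(G_(m,l)) V_(m,l)|^2 with V_(m,l) = a(theta_(m,k,l))^H w_(m,j),
   so |V_(m,l)| <= 1 by Cauchy-Schwarz, and G_(m,l) a centred path gain (variance 1) or quantization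
   error (variance 2^-b). Each G_(m,l) is a function of its own path, while w_(m,j) only sees the
   quantized gains of the UEs in U_m - {j}; these do not involve UE k in the desired-signal and
   inter-group cases and are independent of the errors in the same-group case. Hence every cross
   term has mean zero, and the expectation is at most sum_(m,l) |a_(m,l)|^2 times the variance. *)

theory Submission
  imports Defs
begin

section \<open>Functions of blocks of independent coordinates\<close>

lemma borel_measurable_cnj [measurable (raw)]:
  "f \<in> borel_measurable M \<Longrightarrow> (\<lambda>x. cnj (f x :: complex)) \<in> borel_measurable M"
  by (simp add: borel_measurable_complex_iff)

text \<open>Outside the index set the component is the junk value \<^term>\<open>undefined\<close>, hence constant.\<close>
lemma borel_measurable_PiM_component [measurable]:
  "(\<lambda>x. x i) \<in> borel_measurable (PiM A (\<lambda>_. (borel :: 'b::topological_space measure)))"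
proof (cases "i \<in> A")
  case True
  then show ?thesis by (rule measurable_component_singleton)
next
  case False
  then have "\<And>x. x \<in> space (PiM A (\<lambda>_. (borel :: 'b measure))) \<Longrightarrow> x i = undefined"
    by (auto simp: space_PiM PiE_def extensional_def)
  then show ?thesis
    by (subst measurable_cong[where g="\<lambda>_. undefined"]) auto
qed

definition borel_of_coords :: "'i set \<Rightarrow> (('i \<Rightarrow> 'b::topological_space) \<Rightarrow> complex) \<Rightarrow> bool" where
  "borel_of_coords B F \<longleftrightarrow> F \<in> borel_measurable (PiM B (\<lambda>_. borel)) \<and> (\<forall>x. F (restrict x B) = F x)"

lemma borel_of_coords_mono:
  assumes F: "borel_of_coords B F" and "B \<subseteq> B'"
  shows "borel_of_coords B' F"
proof -
  have restr: "F (restrict x B') = F x" for x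
    using F \<open>B \<subseteq> B'\<close> unfolding borel_of_coords_def
    by (metis Int_absorb1 inf_commute restrict_restrict)
  have "(\<lambda>x. F (restrict x B)) \<in> borel_measurable (PiM B' (\<lambda>_. borel))"
    using F unfolding borel_of_coords_def
    by (intro measurable_compose[OF measurable_restrict_subset[OF \<open>B \<subseteq> B'\<close>]]) auto
  with F restr show ?thesis
    by (simp add: borel_of_coords_def)
qed

lemma borel_of_coords_component: "i \<in> B \<Longrightarrow> borel_of_coords B (\<lambda>x. x i)"
  by (simp add: borel_of_coords_def)

lemma borel_of_coords_add:
  "borel_of_coords B F \<Longrightarrow> borel_of_coords B G \<Longrightarrow> borel_of_coords B (\<lambda>x. F x + G x)"
  by (simp add: borel_of_coords_def borel_measurable_add)

lemma borel_of_coords_mult: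
  "borel_of_coords B F \<Longrightarrow> borel_of_coords B G \<Longrightarrow> borel_of_coords B (\<lambda>x. F x * G x)"
  by (simp add: borel_of_coords_def borel_measurable_times)

lemma borel_of_coords_cnj: "borel_of_coords B F \<Longrightarrow> borel_of_coords B (\<lambda>x. cnj (F x))"
  by (simp add: borel_of_coords_def borel_measurable_cnj)

context prob_space
begin

lemma borel_measurable_of_coords:
  assumes "indep_vars (\<lambda>_. borel) Z J" "B \<subseteq> J" "borel_of_coords B F"
  shows "(\<lambda>\<omega>. F (\<lambda>i. Z i \<omega>)) \<in> borel_measurable M"
proof -
  have "(\<lambda>\<omega>. restrict (\<lambda>i. Z i \<omega>) B) \<in> measurable M (PiM B (\<lambda>_. borel))"
    using assms(1,2) by (auto simp: indep_vars_def intro!: measurable_restrict)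
  from measurable_compose[OF this, of F] show ?thesis
    using assms(3) by (simp add: borel_of_coords_def)
qed

lemma indep_var_of_coords:
  assumes ind: "indep_vars (\<lambda>_. borel) Z J" and "A \<inter> B = {}" "A \<subseteq> J" "B \<subseteq> J"
    and F: "borel_of_coords A F" and H: "borel_of_coords B H"
  shows "indep_var borel (\<lambda>\<omega>. F (\<lambda>i. Z i \<omega>)) borel (\<lambda>\<omega>. H (\<lambda>i. Z i \<omega>))"
  using indep_var_compose[OF indep_var_restrict[OF ind assms(2-4)], of F borel H borel] F H
  by (simp add: borel_of_coords_def comp_def)

lemma indep_var_const:
  assumes "random_variable borel Y"
  shows "indep_var (borel::'b::topological_space measure) (\<lambda>_. c) (borel :: 'b measure) Y"
proof -
  have "indep_vars (case_bool borel borel) (case_bool (\<lambda>_. c) Y) UNIV"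
  proof (subst indep_vars_finite[where E="\<lambda>b. sets (case_bool borel borel b)"])
    show "\<forall>A\<in>\<Pi> i\<in>UNIV. sets (case_bool borel borel i).
        prob (\<Inter>j\<in>UNIV. case_bool (\<lambda>_. c) Y j -` A j \<inter> space M) =
        (\<Prod>j\<in>UNIV. prob (case_bool (\<lambda>_. c) Y j -` A j \<inter> space M))"
    proof
      fix A assume "A \<in> (\<Pi> i\<in>UNIV. sets (case_bool (borel::'b measure) (borel::'b measure) i))"
      show "prob (\<Inter>j\<in>UNIV. case_bool (\<lambda>_. c) Y j -` A j \<inter> space M) =
        (\<Prod>j\<in>UNIV. prob (case_bool (\<lambda>_. c) Y j -` A j \<inter> space M))"
        unfolding UNIV_bool
        by (cases "c \<in> A True") (auto simp: prob_space Int_absorb1 Int_commute)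
    qed
  qed (use assms in \<open>auto split: bool.split simp: Int_stable_def sets.sigma_sets_eq[of borel, simplified]\<close>)
  then show ?thesis
    unfolding indep_var_def .
qed

lemma indep_vars_split_pairs:
  fixes X Y :: "'i \<Rightarrow> 'a \<Rightarrow> 'b::second_countable_topology"
  assumes fin: "finite I" and ind: "indep_vars (\<lambda>_. borel) (\<lambda>i \<omega>. (X i \<omega>, Y i \<omega>)) I"
    and ind2: "\<And>i. i \<in> I \<Longrightarrow> indep_var borel (X i) borel (Y i)"
  shows "indep_vars (\<lambda>_. borel) (\<lambda>(i, b) \<omega>. if b then X i \<omega> else Y i \<omega>) (I \<times> UNIV)"
proof (cases "I = {}")
  case True
  then show ?thesis by (simp add: indep_vars_def indep_sets_def)
next
  case False
  let ?Z = "\<lambda>(i, b) \<omega>. if b then X i \<omega> else Y i \<omega>"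
  have rv: "random_variable borel (X i)" "random_variable borel (Y i)" if "i \<in> I" for i
    using indep_var_rv1[OF ind2[OF that]] indep_var_rv2[OF ind2[OF that]] .
  show ?thesis
  proof (subst indep_vars_finite[where E="\<lambda>_. sets borel"])
    show "\<forall>A\<in>\<Pi> j\<in>I \<times> UNIV. sets borel.
      prob (\<Inter>j\<in>I \<times> UNIV. ?Z j -` A j \<inter> space M) = (\<Prod>j\<in>I \<times> UNIV. prob (?Z j -` A j \<inter> space M))"
    proof
      fix A assume A: "A \<in> (\<Pi> j\<in>I \<times> (UNIV::bool set). sets (borel::'b measure))"
      have A_borel: "A (i, b) \<in> sets borel" if "i \<in> I" for i b
        using A that by auto
      have "(\<Inter>j\<in>I \<times> UNIV. ?Z j -` A j \<inter> space M)
          = (\<Inter>i\<in>I. (\<lambda>\<omega>. (X i \<omega>, Y i \<omega>)) -` (A (i, True) \<times> A (i, False)) \<inter> space M)"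
        using False by (auto; metis (full_types))
      also have "prob \<dots> = (\<Prod>i\<in>I. prob ((\<lambda>\<omega>. (X i \<omega>, Y i \<omega>)) -` (A (i, True) \<times> A (i, False)) \<inter> space M))"
        using A_borel by (intro indep_varsD_finite[OF ind False fin]) (simp add: borel_prod[symmetric])
      also have "\<dots> = (\<Prod>i\<in>I. prob (X i -` A (i, True) \<inter> space M) * prob (Y i -` A (i, False) \<inter> space M))"
        by (intro prod.cong refl indep_varD[OF ind2] A_borel)
      also have "\<dots> = (\<Prod>i\<in>I. \<Prod>b\<in>UNIV. prob (?Z (i, b) -` A (i, b) \<inter> space M))"
        by (simp add: UNIV_bool mult.commute)
      also have "\<dots> = (\<Prod>j\<in>I \<times> UNIV. prob (?Z j -` A j \<inter> space M))"
        by (subst prod.cartesian_product) (intro prod.cong refl; clarsimp)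
      finally show "prob (\<Inter>j\<in>I \<times> UNIV. ?Z j -` A j \<inter> space M) = (\<Prod>j\<in>I \<times> UNIV. prob (?Z j -` A j \<inter> space M))" .
    qed
  qed (use False fin rv in \<open>auto simp: Int_stable_def sets.sigma_sets_eq[of borel, simplified]\<close>)
qed

end

section \<open>Moments of circularly-symmetric complex Gaussians\<close>

context prob_space
begin

lemma normal_distributed_moments:
  assumes "0 < \<sigma>" and D: "distributed M lborel X (normal_density 0 \<sigma>)"
  shows "integrable M X" "expectation X = 0"
    "integrable M (\<lambda>x. (X x)\<^sup>2)" "expectation (\<lambda>x. (X x)\<^sup>2) = \<sigma>\<^sup>2"
proof -
  show "integrable M X"
    using distributed_integrable[OF D, of "\<lambda>x. x"] integrable_normal_moment_nz_1[OF \<open>0 < \<sigma>\<close>, of 0] by simp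
  show mean: "expectation X = 0"
    using normal_distributed_expectation[OF \<open>0 < \<sigma>\<close> D] .
  show "integrable M (\<lambda>x. (X x)\<^sup>2)"
    using distributed_integrable[OF D, of "\<lambda>x. x^2"] integrable_normal_moment[OF \<open>0 < \<sigma>\<close>, of 0 2] by simp
  show "expectation (\<lambda>x. (X x)\<^sup>2) = \<sigma>\<^sup>2"
    using normal_distributed_variance[OF \<open>0 < \<sigma>\<close> D] mean by simp
qed

lemma cgauss_moments:
  assumes C: "cgauss M s2 Z" and "0 < s2"
  shows "Z \<in> borel_measurable M" "integrable M Z" "(\<integral>\<omega>. Z \<omega> \<partial>M) = 0"
    "integrable M (\<lambda>\<omega>. (cmod (Z \<omega>))\<^sup>2)" "(\<integral>\<omega>. (cmod (Z \<omega>))\<^sup>2 \<partial>M) = s2"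
proof -
  have pos: "0 < sqrt (s2 / 2)" and sq: "(sqrt (s2 / 2))\<^sup>2 = s2 / 2"
    using \<open>0 < s2\<close> by simp_all
  have DR: "distributed M lborel (\<lambda>\<omega>. Re (Z \<omega>)) (normal_density 0 (sqrt (s2 / 2)))"
    and DI: "distributed M lborel (\<lambda>\<omega>. Im (Z \<omega>)) (normal_density 0 (sqrt (s2 / 2)))"
    using C by (simp_all add: cgauss_def)
  show "Z \<in> borel_measurable M"
    using distributed_measurable[OF DR] distributed_measurable[OF DI]
    by (simp add: borel_measurable_complex_iff)
  note Re = normal_distributed_moments[OF pos DR, unfolded sq]
    and Im = normal_distributed_moments[OF pos DI, unfolded sq]
  have Z_eq: "Z = (\<lambda>\<omega>. complex_of_real (Re (Z \<omega>)) + \<i> * complex_of_real (Im (Z \<omega>)))"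
    by (simp add: complex_eq[symmetric])
  show "integrable M Z" "(\<integral>\<omega>. Z \<omega> \<partial>M) = 0"
    by (subst Z_eq, simp add: Re Im)+
  have "(\<lambda>\<omega>. (cmod (Z \<omega>))\<^sup>2) = (\<lambda>\<omega>. (Re (Z \<omega>))\<^sup>2 + (Im (Z \<omega>))\<^sup>2)"
    by (simp add: cmod_power2)
  then show "integrable M (\<lambda>\<omega>. (cmod (Z \<omega>))\<^sup>2)" "(\<integral>\<omega>. (cmod (Z \<omega>))\<^sup>2 \<partial>M) = s2"
    by (simp_all add: Re Im)
qed

end

section \<open>Second moments of sums of centred terms\<close>

lemma integral_cmod_sum_square_orthogonal:
  fixes x :: "'t \<Rightarrow> 'a \<Rightarrow> complex"
  assumes "finite T"
    and int: "\<And>t t'. t \<in> T \<Longrightarrow> t' \<in> T \<Longrightarrow> integrable M (\<lambda>\<omega>. x t \<omega> * cnj (x t' \<omega>))"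
    and orth: "\<And>t t'. t \<in> T \<Longrightarrow> t' \<in> T \<Longrightarrow> t \<noteq> t' \<Longrightarrow> (\<integral>\<omega>. x t \<omega> * cnj (x t' \<omega>) \<partial>M) = 0"
  shows "integrable M (\<lambda>\<omega>. (cmod (\<Sum>t\<in>T. x t \<omega>))\<^sup>2)"
    and "(\<integral>\<omega>. (cmod (\<Sum>t\<in>T. x t \<omega>))\<^sup>2 \<partial>M) = (\<Sum>t\<in>T. \<integral>\<omega>. (cmod (x t \<omega>))\<^sup>2 \<partial>M)"
proof -
  have expand: "complex_of_real ((cmod (\<Sum>t\<in>T. x t \<omega>))\<^sup>2) = (\<Sum>t\<in>T. \<Sum>t'\<in>T. x t \<omega> * cnj (x t' \<omega>))" for \<omega>
    by (subst complex_norm_square) (simp add: sum_product cnj_sum)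
  have "integrable M (\<lambda>\<omega>. complex_of_real ((cmod (\<Sum>t\<in>T. x t \<omega>))\<^sup>2))"
    unfolding expand by (intro Bochner_Integration.integrable_sum int)
  then show "integrable M (\<lambda>\<omega>. (cmod (\<Sum>t\<in>T. x t \<omega>))\<^sup>2)"
    by (simp only: complex_of_real_integrable_eq)
  have "complex_of_real (\<integral>\<omega>. (cmod (\<Sum>t\<in>T. x t \<omega>))\<^sup>2 \<partial>M)
      = (\<Sum>t\<in>T. \<Sum>t'\<in>T. \<integral>\<omega>. x t \<omega> * cnj (x t' \<omega>) \<partial>M)"
    unfolding integral_complex_of_real[symmetric] expand
    using int by (simp add: Bochner_Integration.integral_sum Bochner_Integration.integrable_sum)
  also have "\<dots> = (\<Sum>t\<in>T. \<integral>\<omega>. x t \<omega> * cnj (x t \<omega>) \<partial>M)"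
    using \<open>finite T\<close> orth by (intro sum.cong refl) (auto simp: sum.remove intro!: sum.neutral)
  also have "\<dots> = complex_of_real (\<Sum>t\<in>T. \<integral>\<omega>. (cmod (x t \<omega>))\<^sup>2 \<partial>M)"
    by (simp add: complex_norm_square[symmetric] del: of_real_power)
  finally show "(\<integral>\<omega>. (cmod (\<Sum>t\<in>T. x t \<omega>))\<^sup>2 \<partial>M) = (\<Sum>t\<in>T. \<integral>\<omega>. (cmod (x t \<omega>))\<^sup>2 \<partial>M)"
    using of_real_eq_iff by blast
qed

locale indep_centred_terms = prob_space +
  fixes Z :: "'i \<Rightarrow> 'a \<Rightarrow> 'b::topological_space" and J :: "'i set" and T :: "'t set"
    and BG BV :: "'t \<Rightarrow> 'i set" and G V :: "'t \<Rightarrow> ('i \<Rightarrow> 'b) \<Rightarrow> complex" and \<sigma> :: "'t \<Rightarrow> real"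
  assumes indep_Z: "indep_vars (\<lambda>_. borel) Z J" and finite_T: "finite T"
    and BG_subset: "\<And>t. t \<in> T \<Longrightarrow> BG t \<subseteq> J" and BV_subset: "\<And>t. t \<in> T \<Longrightarrow> BV t \<subseteq> J"
    and BG_disjoint: "\<And>t t'. t \<in> T \<Longrightarrow> t' \<in> T \<Longrightarrow> t \<noteq> t' \<Longrightarrow> BG t \<inter> BG t' = {}"
    and BG_BV_disjoint: "\<And>t t'. t \<in> T \<Longrightarrow> t' \<in> T \<Longrightarrow> BG t \<inter> BV t' = {}"
    and G_borel: "\<And>t. t \<in> T \<Longrightarrow> borel_of_coords (BG t) (G t)"
    and V_borel: "\<And>t. t \<in> T \<Longrightarrow> borel_of_coords (BV t) (V t)"
    and V_le_1: "\<And>t \<omega>. t \<in> T \<Longrightarrow> \<omega> \<in> space M \<Longrightarrow> cmod (V t (\<lambda>i. Z i \<omega>)) \<le> 1"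
    and G_integrable: "\<And>t. t \<in> T \<Longrightarrow> integrable M (\<lambda>\<omega>. G t (\<lambda>i. Z i \<omega>))"
    and G_mean: "\<And>t. t \<in> T \<Longrightarrow> (\<integral>\<omega>. G t (\<lambda>i. Z i \<omega>) \<partial>M) = 0"
    and G_sq_integrable: "\<And>t. t \<in> T \<Longrightarrow> integrable M (\<lambda>\<omega>. (cmod (G t (\<lambda>i. Z i \<omega>)))\<^sup>2)"
    and G_variance: "\<And>t. t \<in> T \<Longrightarrow> (\<integral>\<omega>. (cmod (G t (\<lambda>i. Z i \<omega>)))\<^sup>2 \<partial>M) = \<sigma> t"
begin

definition summand :: "'t \<Rightarrow> 'a \<Rightarrow> complex" where
  "summand t \<omega> = cnj (G t (\<lambda>i. Z i \<omega>)) * V t (\<lambda>i. Z i \<omega>)"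

lemma summand_measurable: "t \<in> T \<Longrightarrow> summand t \<in> borel_measurable M"
  unfolding summand_def
  by (intro borel_measurable_times borel_measurable_cnj
      borel_measurable_of_coords[OF indep_Z BG_subset G_borel] borel_measurable_of_coords[OF indep_Z BV_subset V_borel])

lemma summand_sq_le:
  assumes "t \<in> T" "\<omega> \<in> space M"
  shows "(cmod (summand t \<omega>))\<^sup>2 \<le> (cmod (G t (\<lambda>i. Z i \<omega>)))\<^sup>2"
proof -
  have "(cmod (V t (\<lambda>i. Z i \<omega>)))\<^sup>2 \<le> 1"
    using V_le_1[OF assms] by (simp add: power_le_one)
  then show ?thesis
    by (simp add: summand_def norm_mult power_mult_distrib mult_left_le)
qed

lemma summand_sq_integrable: "t \<in> T \<Longrightarrow> integrable M (\<lambda>\<omega>. (cmod (summand t \<omega>))\<^sup>2)"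
  using summand_sq_le summand_measurable
  by (intro Bochner_Integration.integrable_bound[OF G_sq_integrable]) (auto intro!: AE_I2)

text \<open>\<open>G t\<close> is independent of the product of all the other factors of the cross term.\<close>
lemma summand_orthogonal:
  assumes t: "t \<in> T" and t': "t' \<in> T" and "t \<noteq> t'"
  shows "integrable M (\<lambda>\<omega>. summand t \<omega> * cnj (summand t' \<omega>))"
    and "(\<integral>\<omega>. summand t \<omega> * cnj (summand t' \<omega>) \<partial>M) = 0"
proof -
  define R where "R y = G t' y * V t y * cnj (V t' y)" for y
  let ?B = "BG t' \<union> BV t \<union> BV t'"
  have "borel_of_coords ?B (G t')" "borel_of_coords ?B (V t)" "borel_of_coords ?B (V t')"
    by (auto intro: borel_of_coords_mono G_borel V_borel t t')
  then have R: "borel_of_coords ?B R"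
    unfolding R_def by (intro borel_of_coords_mult borel_of_coords_cnj)
  have indep: "indep_var borel (\<lambda>\<omega>. cnj (G t (\<lambda>i. Z i \<omega>))) borel (\<lambda>\<omega>. R (\<lambda>i. Z i \<omega>))"
    using BG_disjoint[OF t t' \<open>t \<noteq> t'\<close>] BG_BV_disjoint[OF t t] BG_BV_disjoint[OF t t']
      BG_subset[OF t] BG_subset[OF t'] BV_subset[OF t] BV_subset[OF t']
    by (intro indep_var_of_coords[OF indep_Z _ _ _ borel_of_coords_cnj[OF G_borel[OF t]] R]) auto
  have "integrable M (\<lambda>\<omega>. R (\<lambda>i. Z i \<omega>))"
  proof (rule Bochner_Integration.integrable_bound[OF G_integrable[OF t']])
    show "(\<lambda>\<omega>. R (\<lambda>i. Z i \<omega>)) \<in> borel_measurable M"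
      using R BG_subset[OF t'] BV_subset[OF t] BV_subset[OF t'] by (intro borel_measurable_of_coords[OF indep_Z]) auto
    have "cmod (V t (\<lambda>i. Z i \<omega>)) * cmod (V t' (\<lambda>i. Z i \<omega>)) \<le> 1" if "\<omega> \<in> space M" for \<omega>
      using V_le_1[OF t that] V_le_1[OF t' that] by (simp add: mult_le_one)
    then show "AE \<omega> in M. norm (R (\<lambda>i. Z i \<omega>)) \<le> norm (G t' (\<lambda>i. Z i \<omega>))"
      by (auto simp: R_def norm_mult mult.assoc mult_left_le intro!: AE_I2)
  qed
  moreover have "summand t \<omega> * cnj (summand t' \<omega>) = cnj (G t (\<lambda>i. Z i \<omega>)) * R (\<lambda>i. Z i \<omega>)" for \<omega>
    by (simp add: summand_def R_def mult_ac)
  ultimately show "integrable M (\<lambda>\<omega>. summand t \<omega> * cnj (summand t' \<omega>))"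
    and "(\<integral>\<omega>. summand t \<omega> * cnj (summand t' \<omega>) \<partial>M) = 0"
    using indep_var_lebesgue_integral[OF indep] indep_var_integrable[OF indep] G_integrable[OF t] G_mean[OF t]
    by simp_all
qed

lemma second_moment_sum_le:
  fixes c :: "'t \<Rightarrow> complex"
  shows "integrable M (\<lambda>\<omega>. (cmod (\<Sum>t\<in>T. c t * summand t \<omega>))\<^sup>2)"
    and "(\<integral>\<omega>. (cmod (\<Sum>t\<in>T. c t * summand t \<omega>))\<^sup>2 \<partial>M) \<le> (\<Sum>t\<in>T. (cmod (c t))\<^sup>2 * \<sigma> t)"
proof -
  have int: "integrable M (\<lambda>\<omega>. c t * summand t \<omega> * cnj (c t' * summand t' \<omega>))" if "t \<in> T" "t' \<in> T" for t t'
  proof (cases "t = t'")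
    case True
    then show ?thesis
      using summand_sq_integrable[OF that(1)]
      by (simp add: mult_ac complex_norm_square[symmetric] del: of_real_power)
  qed (use summand_orthogonal that in \<open>simp add: mult_ac\<close>)
  have orth: "(\<integral>\<omega>. c t * summand t \<omega> * cnj (c t' * summand t' \<omega>) \<partial>M) = 0"
    if "t \<in> T" "t' \<in> T" "t \<noteq> t'" for t t'
    using summand_orthogonal[OF that] by (simp add: mult_ac)
  note pythagoras = integral_cmod_sum_square_orthogonal[where x = "\<lambda>t \<omega>. c t * summand t \<omega>", OF finite_T int orth]
  then show "integrable M (\<lambda>\<omega>. (cmod (\<Sum>t\<in>T. c t * summand t \<omega>))\<^sup>2)"
    by blast
  have "(\<integral>\<omega>. (cmod (c t * summand t \<omega>))\<^sup>2 \<partial>M) \<le> (cmod (c t))\<^sup>2 * \<sigma> t" if "t \<in> T" for t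
  proof -
    have "(\<integral>\<omega>. (cmod (summand t \<omega>))\<^sup>2 \<partial>M) \<le> (\<integral>\<omega>. (cmod (G t (\<lambda>i. Z i \<omega>)))\<^sup>2 \<partial>M)"
      using that summand_sq_le summand_sq_integrable G_sq_integrable by (intro integral_mono_AE) (auto intro!: AE_I2)
    then show ?thesis
      using G_variance[OF that] by (simp add: norm_mult power_mult_distrib mult_left_mono)
  qed
  then have "(\<Sum>t\<in>T. \<integral>\<omega>. (cmod (c t * summand t \<omega>))\<^sup>2 \<partial>M) \<le> (\<Sum>t\<in>T. (cmod (c t))\<^sup>2 * \<sigma> t)"
    by (rule sum_mono)
  with pythagoras(2) show "(\<integral>\<omega>. (cmod (\<Sum>t\<in>T. c t * summand t \<omega>))\<^sup>2 \<partial>M) \<le> (\<Sum>t\<in>T. (cmod (c t))\<^sup>2 * \<sigma> t)"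
    by simp
qed

end

lemma nn_integral_le_of_integral_le:
  assumes "integrable M f" "\<And>\<omega>. 0 \<le> f \<omega>" "integral\<^sup>L M f \<le> c"
  shows "(\<integral>\<^sup>+\<omega>. ennreal (f \<omega>) \<partial>M) \<le> ennreal c"
  using assms by (subst nn_integral_eq_integral) (auto intro: ennreal_leI)

lemma nn_integral_sum_le_of_integral_le:
  assumes "finite J" and "\<And>j. j \<in> J \<Longrightarrow> integrable M (f j)" and "\<And>j \<omega>. 0 \<le> f j \<omega>"
    and "\<And>j. j \<in> J \<Longrightarrow> integral\<^sup>L M (f j) \<le> c j"
  shows "(\<integral>\<^sup>+\<omega>. ennreal (\<Sum>j\<in>J. f j \<omega>) \<partial>M) \<le> ennreal (\<Sum>j\<in>J. c j)"
  using assms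
  by (intro nn_integral_le_of_integral_le)
     (auto simp: Bochner_Integration.integral_sum intro!: sum_mono sum_nonneg)

section \<open>The cell-free downlink\<close>

lemma mpchan_split:
  "mpchan N L \<beta> \<kappa> \<theta> G n = mpchan N L \<beta> \<kappa> \<theta> (\<lambda>l. G l - D l) n + mpchan N L \<beta> \<kappa> \<theta> D n"
  unfolding mpchan_def by (simp add: distrib_left[symmetric] sum.distrib[symmetric] algebra_simps)

lemma mpchan_cong:
  "(\<And>l. l < L \<Longrightarrow> G l = G' l) \<Longrightarrow> mpchan N L \<beta> \<kappa> \<theta> G = mpchan N L \<beta> \<kappa> \<theta> G'"
  unfolding mpchan_def by (intro ext arg_cong2[where f="(*)"] refl sum.cong) auto

lemma hip_add_left: "hip N (\<lambda>n. x n + y n) v = hip N x v + hip N y v"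
  unfolding hip_def by (simp add: distrib_right sum.distrib)

lemma hip_mpchan:
  "hip N (mpchan N L \<beta> \<kappa> \<theta> G) v =
   (\<Sum>l<L. complex_of_real (sqrt (\<beta> * real N) * sqrt (\<kappa> l)) * cnj (G l) * hip N (steer N (\<theta> l)) v)"
  unfolding hip_def mpchan_def
  by (simp add: cnj_sum sum_distrib_left sum_distrib_right mult_ac) (subst sum.swap, simp add: mult_ac)

lemma steer_norm:
  assumes "1 \<le> N"
  shows "(\<Sum>n<N. (cmod (steer N \<theta> n))\<^sup>2) = 1"
proof -
  have "(\<Sum>n<N. (cmod (steer N \<theta> n))\<^sup>2) = (\<Sum>n<N. 1 / real N)"
    by (intro sum.cong refl) (simp add: steer_def norm_divide power_divide)
  then show ?thesis
    using assms by simp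
qed

lemma norm_hip_le_1:
  assumes "(\<Sum>n<N. (cmod (x n))\<^sup>2) = 1" "(\<Sum>n<N. (cmod (y n))\<^sup>2) = 1"
  shows "cmod (hip N x y) \<le> 1"
proof -
  have "cmod (hip N x y) \<le> (\<Sum>n<N. \<bar>cmod (x n)\<bar> * \<bar>cmod (y n)\<bar>)"
    unfolding hip_def by (rule order_trans[OF norm_sum]) (simp add: norm_mult)
  also have "\<dots> \<le> L2_set (\<lambda>n. cmod (x n)) {..<N} * L2_set (\<lambda>n. cmod (y n)) {..<N}"
    by (rule L2_set_mult_ineq)
  also have "\<dots> = 1"
    using assms by (simp add: L2_set_def)
  finally show ?thesis .
qed

lemma measurable_W_of_channels:
  fixes W :: "(nat \<Rightarrow> nat \<Rightarrow> complex) \<Rightarrow> nat \<Rightarrow> complex" and f :: "nat \<Rightarrow> nat \<Rightarrow> 'i"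
  assumes W: "W \<in> measurable (Pi\<^sub>M UNIV (\<lambda>_. Pi\<^sub>M UNIV (\<lambda>_. borel))) (Pi\<^sub>M UNIV (\<lambda>_. borel))"
  shows "(\<lambda>x. W (\<lambda>i. if P i then mpchan N L (\<beta> i) (\<kappa> i) (\<theta> i) (\<lambda>l. x (f i l)) else (\<lambda>_. 0)))
     \<in> measurable (PiM B (\<lambda>_. borel)) (Pi\<^sub>M UNIV (\<lambda>_. borel))"
proof -
  have channel: "(\<lambda>x. if P i then mpchan N L (\<beta> i) (\<kappa> i) (\<theta> i) (\<lambda>l. x (f i l)) else (\<lambda>_. 0))
      \<in> measurable (PiM B (\<lambda>_. borel)) (Pi\<^sub>M UNIV (\<lambda>_. borel))" for i
  proof (cases "P i")
    case True
    have "(\<lambda>x. \<lambda>n\<in>UNIV. mpchan N L (\<beta> i) (\<kappa> i) (\<theta> i) (\<lambda>l. x (f i l)) n)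
      \<in> measurable (PiM B (\<lambda>_. borel)) (Pi\<^sub>M UNIV (\<lambda>_. borel))"
      unfolding mpchan_def by measurable
    then show ?thesis
      using True by (simp add: restrict_def)
  qed (simp add: space_PiM)
  have "(\<lambda>x. \<lambda>i\<in>UNIV. if P i then mpchan N L (\<beta> i) (\<kappa> i) (\<theta> i) (\<lambda>l. x (f i l)) else (\<lambda>_. 0))
      \<in> measurable (PiM B (\<lambda>_. borel)) (Pi\<^sub>M UNIV (\<lambda>_. Pi\<^sub>M UNIV (\<lambda>_. borel)))"
    by (rule measurable_restrict) (rule channel)
  from measurable_compose[OF this W] show ?thesis
    by (simp add: restrict_def)
qed

lemma borel_measurable_hip_right:
  assumes "F \<in> measurable (PiM B (\<lambda>_. borel)) (Pi\<^sub>M UNIV (\<lambda>_. borel))"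
  shows "(\<lambda>x. hip N s (F x)) \<in> borel_measurable (PiM B (\<lambda>_. (borel::complex measure)))"
proof -
  have "(\<lambda>x. F x n) \<in> borel_measurable (PiM B (\<lambda>_. (borel::complex measure)))" for n
    using measurable_compose[OF assms measurable_component_singleton[of n UNIV]] by simp
  then show ?thesis
    unfolding hip_def by (intro borel_measurable_sum borel_measurable_times) auto
qed

text \<open>The local definitions \<open>p\<close>, \<open>h\<close>, \<open>hq\<close>, \<open>w\<close> of the theorem become parameters with defining
  equations.\<close>
locale cell_free_downlink = prob_space \<Omega>
  for \<Omega> :: "'w measure" and M K N L :: nat and A :: "nat \<Rightarrow> nat set"
    and \<beta> :: "nat \<Rightarrow> nat \<Rightarrow> real" and \<kappa> \<theta> b :: "nat \<Rightarrow> nat \<Rightarrow> nat \<Rightarrow> real"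
    and g \<Delta> :: "nat \<Rightarrow> nat \<Rightarrow> nat \<Rightarrow> 'w \<Rightarrow> complex" and P :: "nat \<Rightarrow> real"
    and W :: "nat \<Rightarrow> nat \<Rightarrow> (nat \<Rightarrow> nat \<Rightarrow> complex) \<Rightarrow> nat \<Rightarrow> complex"
    and p :: "nat \<Rightarrow> real" and h hq w :: "nat \<Rightarrow> nat \<Rightarrow> 'w \<Rightarrow> nat \<Rightarrow> complex" +
  assumes p_eq: "p = (\<lambda>m. P m / real (card (ugroup K A m)))"
    and h_eq: "h = (\<lambda>m k \<omega>. mpchan N L (\<beta> m k) (\<kappa> m k) (\<theta> m k) (\<lambda>l. g m k l \<omega>))"
    and hq_eq: "hq = (\<lambda>m k \<omega>. mpchan N L (\<beta> m k) (\<kappa> m k) (\<theta> m k) (\<lambda>l. g m k l \<omega> - \<Delta> m k l \<omega>))"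
    and w_eq: "w = (\<lambda>m j \<omega>. W m j (\<lambda>i. if i \<in> ugroup K A m - {j}
                  then mpchan N L (\<beta> m i) (\<kappa> m i) (\<theta> m i) (\<lambda>l. g m i l \<omega> - \<Delta> m i l \<omega>)
                  else (\<lambda>_. 0)))"
    and N_ge_1: "1 \<le> N"
    and clusters_subset: "\<And>k. k < K \<Longrightarrow> A k \<subseteq> {..<M}"
    and large_scale_nonneg: "\<And>m k. m < M \<Longrightarrow> k < K \<Longrightarrow> 0 \<le> \<beta> m k"
    and path_weight_nonneg: "\<And>m k l. m < M \<Longrightarrow> k < K \<Longrightarrow> l < L \<Longrightarrow> 0 \<le> \<kappa> m k l"
    and path_weight_sum: "\<And>m k. m < M \<Longrightarrow> k < K \<Longrightarrow> (\<Sum>l<L. \<kappa> m k l) = 1"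
    and power_nonneg: "\<And>m. m < M \<Longrightarrow> 0 \<le> P m"
    and gain_cgauss: "\<And>m k l. m < M \<Longrightarrow> k < K \<Longrightarrow> l < L \<Longrightarrow> cgauss \<Omega> 1 (g m k l)"
    and error_cgauss: "\<And>m k l. m < M \<Longrightarrow> k < K \<Longrightarrow> l < L \<Longrightarrow> m \<in> A k \<Longrightarrow>
      cgauss \<Omega> (2 powr (- b m k l)) (\<Delta> m k l)"
    and error_indep_quantized: "\<And>m k l. m < M \<Longrightarrow> k < K \<Longrightarrow> l < L \<Longrightarrow> m \<in> A k \<Longrightarrow>
      indep_var borel (\<Delta> m k l) borel (\<lambda>\<omega>. g m k l \<omega> - \<Delta> m k l \<omega>)"
    and paths_indep: "indep_vars (\<lambda>_. borel)
      (\<lambda>(m, k, l) \<omega>. (g m k l \<omega>, if m \<in> A k then \<Delta> m k l \<omega> else 0)) ({..<M} \<times> {..<K} \<times> {..<L})"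
    and beamformer_measurable: "\<And>m j. m < M \<Longrightarrow> j \<in> ugroup K A m \<Longrightarrow>
      W m j \<in> measurable (Pi\<^sub>M UNIV (\<lambda>_. Pi\<^sub>M UNIV (\<lambda>_. borel))) (Pi\<^sub>M UNIV (\<lambda>_. borel))"
    and beamformer_unit: "\<And>m j \<omega>. m < M \<Longrightarrow> j \<in> ugroup K A m \<Longrightarrow> \<omega> \<in> space \<Omega> \<Longrightarrow>
      (\<Sum>n<N. (cmod (w m j \<omega> n))\<^sup>2) = 1"
    and zero_forcing: "\<And>m j i \<omega>. m < M \<Longrightarrow> j \<in> ugroup K A m \<Longrightarrow> i \<in> ugroup K A m - {j} \<Longrightarrow>
      \<omega> \<in> space \<Omega> \<Longrightarrow> hip N (hq m i \<omega>) (w m j \<omega>) = 0"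
begin

lemma in_ugroup_iff: "j \<in> ugroup K A m \<longleftrightarrow> j < K \<and> m \<in> A j"
  by (simp add: ugroup_def)

definition quant_error :: "nat \<Rightarrow> nat \<Rightarrow> nat \<Rightarrow> 'w \<Rightarrow> complex" where
  "quant_error m i l \<omega> = (if m \<in> A i then \<Delta> m i l \<omega> else 0)"

text \<open>Outside the cluster of \<open>i\<close>
  nothing is reported; the error is then taken to be \<open>0\<close> and the quantized gain is the gain.\<close>
definition coord :: "(nat \<times> nat \<times> nat) \<times> bool \<Rightarrow> 'w \<Rightarrow> complex" where
  "coord = (\<lambda>((m, i, l), is_err) \<omega>.
     if is_err then quant_error m i l \<omega> else g m i l \<omega> - quant_error m i l \<omega>)"

definition coord_index :: "((nat \<times> nat \<times> nat) \<times> bool) set" where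
  "coord_index = ({..<M} \<times> {..<K} \<times> {..<L}) \<times> UNIV"

lemma coord_simps [simp]:
  "coord ((m, i, l), True) \<omega> = quant_error m i l \<omega>"
  "coord ((m, i, l), False) \<omega> = g m i l \<omega> - quant_error m i l \<omega>"
  by (simp_all add: coord_def)

lemma indep_coord: "indep_vars (\<lambda>_. borel) coord coord_index"
proof -
  let ?I = "{..<M} \<times> {..<K} \<times> {..<L}"
  let ?X = "\<lambda>(m, i, l). quant_error m i l" and ?Y = "\<lambda>(m, i, l) \<omega>. g m i l \<omega> - quant_error m i l \<omega>"
  have "(\<lambda>(a::complex, b::complex). (b, a - b)) \<in> borel_measurable borel"
    unfolding case_prod_beta by (rule borel_measurable_continuous_onI) (intro continuous_intros)
  from indep_vars_compose2[OF paths_indep this]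
  have pairs: "indep_vars (\<lambda>_. borel) (\<lambda>t \<omega>. (?X t \<omega>, ?Y t \<omega>)) ?I"
    by (rule indep_vars_cong[THEN iffD1, rotated 3]) (auto simp: quant_error_def fun_eq_iff)
  have "indep_var borel (?X t) borel (?Y t)" if "t \<in> ?I" for t
  proof -
    obtain m i l where t: "t = (m, i, l)" and "m < M" "i < K" "l < L"
      using \<open>t \<in> ?I\<close> by auto
    show ?thesis
    proof (cases "m \<in> A i")
      case True
      then have "quant_error m i l = \<Delta> m i l"
        by (simp add: quant_error_def fun_eq_iff)
      then show ?thesis
        using t True error_indep_quantized[OF \<open>m < M\<close> \<open>i < K\<close> \<open>l < L\<close>] by simp
    next
      case False
      then have "quant_error m i l = (\<lambda>_. 0)"
        by (simp add: quant_error_def fun_eq_iff)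
      with cgauss_moments(1)[OF gain_cgauss[OF \<open>m < M\<close> \<open>i < K\<close> \<open>l < L\<close>]]
      show ?thesis
        using t indep_var_const by simp
    qed
  qed
  moreover have "(\<lambda>(t, is_err) \<omega>. if is_err then ?X t \<omega> else ?Y t \<omega>) = coord"
    by (auto simp: coord_def fun_eq_iff)
  ultimately show ?thesis
    using indep_vars_split_pairs[OF _ pairs] by (simp add: coord_index_def)
qed

definition beam_block :: "nat \<Rightarrow> nat \<Rightarrow> ((nat \<times> nat \<times> nat) \<times> bool) set" where
  "beam_block m j = {((m, i, l), False) | i l. i \<in> ugroup K A m - {j} \<and> l < L}"

definition beam_of_coords :: "nat \<Rightarrow> nat \<Rightarrow> ((nat \<times> nat \<times> nat) \<times> bool \<Rightarrow> complex) \<Rightarrow> nat \<Rightarrow> complex" where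
  "beam_of_coords m j x = W m j (\<lambda>i. if i \<in> ugroup K A m - {j}
     then mpchan N L (\<beta> m i) (\<kappa> m i) (\<theta> m i) (\<lambda>l. x ((m, i, l), False)) else (\<lambda>_. 0))"

lemma beam_of_coords_coord: "beam_of_coords m j (\<lambda>t. coord t \<omega>) = w m j \<omega>"
  unfolding beam_of_coords_def w_eq
  by (intro arg_cong[where f="W m j"] ext) (auto simp: quant_error_def in_ugroup_iff)

lemma beam_block_subset: "m < M \<Longrightarrow> beam_block m j \<subseteq> coord_index"
  by (auto simp: beam_block_def coord_index_def in_ugroup_iff)

lemma borel_of_coords_steer_beam:
  assumes "m < M" "j \<in> ugroup K A m"
  shows "borel_of_coords (beam_block m j) (\<lambda>x. hip N s (beam_of_coords m j x))"
proof -
  have "beam_of_coords m j (restrict x (beam_block m j)) = beam_of_coords m j x" for x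
    unfolding beam_of_coords_def
    by (intro arg_cong[where f="W m j"] ext if_cong refl mpchan_cong) (auto simp: beam_block_def)
  moreover have "(\<lambda>x. hip N s (beam_of_coords m j x)) \<in> borel_measurable (PiM (beam_block m j) (\<lambda>_. borel))"
    unfolding beam_of_coords_def using assms
    by (intro borel_measurable_hip_right measurable_W_of_channels beamformer_measurable)
  ultimately show ?thesis
    by (simp add: borel_of_coords_def)
qed

lemma norm_hip_steer_beam_le_1:
  "m < M \<Longrightarrow> j \<in> ugroup K A m \<Longrightarrow> \<omega> \<in> space \<Omega> \<Longrightarrow> cmod (hip N (steer N \<phi>) (w m j \<omega>)) \<le> 1"
  by (intro norm_hip_le_1 steer_norm N_ge_1 beamformer_unit)

lemma indep_centred_terms_paths:
  fixes G :: "nat \<Rightarrow> nat \<Rightarrow> ((nat \<times> nat \<times> nat) \<times> bool \<Rightarrow> complex) \<Rightarrow> complex"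
    and BG :: "nat \<Rightarrow> nat \<Rightarrow> ((nat \<times> nat \<times> nat) \<times> bool) set" and \<sigma> :: "nat \<Rightarrow> nat \<Rightarrow> real"
  assumes "j < K" "k < K" "S \<subseteq> A j"
    and BG: "\<And>m l. m \<in> S \<Longrightarrow> l < L \<Longrightarrow> BG m l \<subseteq> {((m, k, l), True), ((m, k, l), False)} - beam_block m j"
    and G: "\<And>m l. m \<in> S \<Longrightarrow> l < L \<Longrightarrow> borel_of_coords (BG m l) (G m l)"
    and G_int: "\<And>m l. m \<in> S \<Longrightarrow> l < L \<Longrightarrow> integrable \<Omega> (\<lambda>\<omega>. G m l (\<lambda>t. coord t \<omega>))"
    and G_mean: "\<And>m l. m \<in> S \<Longrightarrow> l < L \<Longrightarrow> (\<integral>\<omega>. G m l (\<lambda>t. coord t \<omega>) \<partial>\<Omega>) = 0"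
    and G_sq_int: "\<And>m l. m \<in> S \<Longrightarrow> l < L \<Longrightarrow> integrable \<Omega> (\<lambda>\<omega>. (cmod (G m l (\<lambda>t. coord t \<omega>)))\<^sup>2)"
    and G_var: "\<And>m l. m \<in> S \<Longrightarrow> l < L \<Longrightarrow> (\<integral>\<omega>. (cmod (G m l (\<lambda>t. coord t \<omega>)))\<^sup>2 \<partial>\<Omega>) = \<sigma> m l"
  shows "indep_centred_terms \<Omega> coord coord_index (S \<times> {..<L}) (\<lambda>(m, l). BG m l) (\<lambda>(m, l). beam_block m j)
      (\<lambda>(m, l). G m l) (\<lambda>(m, l) x. hip N (steer N (\<theta> m k l)) (beam_of_coords m j x)) (\<lambda>(m, l). \<sigma> m l)"
proof -
  have S: "m < M" "j \<in> ugroup K A m" if "m \<in> S" for m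
    using that \<open>S \<subseteq> A j\<close> clusters_subset[OF \<open>j < K\<close>] \<open>j < K\<close> by (auto simp: in_ugroup_iff)
  define T where "T = S \<times> {..<L}"
  have "finite T"
    using \<open>S \<subseteq> A j\<close> clusters_subset[OF \<open>j < K\<close>] unfolding T_def
    by (meson finite_SigmaI finite_lessThan finite_subset subset_trans)
  have T_cases: "(\<And>m l. t = (m, l) \<Longrightarrow> m \<in> S \<Longrightarrow> l < L \<Longrightarrow> thesis) \<Longrightarrow> thesis" if "t \<in> T" for t thesis
    using that by (cases t) (auto simp: T_def)
  define V where "V = (\<lambda>(m, l) x. hip N (steer N (\<theta> m k l)) (beam_of_coords m j x))"
  let ?BG = "\<lambda>(m, l). BG m l" and ?BV = "\<lambda>(m, l). beam_block m j"
  have BG_index: "?BG t \<subseteq> coord_index" if "t \<in> T" for t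
  proof (rule T_cases[OF that])
    fix m l assume "t = (m, l)" "m \<in> S" "l < L"
    then show ?thesis
      using BG[of m l] S(1) \<open>k < K\<close> by (auto simp: coord_index_def)
  qed
  have BV_index: "?BV t \<subseteq> coord_index" if "t \<in> T" for t
    using that S(1) beam_block_subset by (auto simp: T_def)
  have disj_G: "?BG t \<inter> ?BG t' = {}" if "t \<in> T" "t' \<in> T" "t \<noteq> t'" for t t'
  proof (rule T_cases[OF \<open>t \<in> T\<close>], rule T_cases[OF \<open>t' \<in> T\<close>])
    fix m l m' l' assume "t = (m, l)" "m \<in> S" "l < L" "t' = (m', l')" "m' \<in> S" "l' < L"
    then show ?thesis
      using BG[of m l] BG[of m' l'] \<open>t \<noteq> t'\<close> by auto
  qed
  have disj_GV: "?BG t \<inter> ?BV t' = {}" if "t \<in> T" "t' \<in> T" for t t'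
  proof (rule T_cases[OF \<open>t \<in> T\<close>], rule T_cases[OF \<open>t' \<in> T\<close>])
    fix m l m' l' assume "t = (m, l)" "m \<in> S" "l < L" "t' = (m', l')"
    then show ?thesis
      using BG[of m l] by (auto simp: beam_block_def)
  qed
  have G': "borel_of_coords (?BG t) (case_prod G t)" if "t \<in> T" for t
    using that G by (auto simp: T_def)
  have V': "borel_of_coords (?BV t) (V t)" if "t \<in> T" for t
    using that S borel_of_coords_steer_beam by (auto simp: T_def V_def)
  have V_le: "cmod (V t (\<lambda>i. coord i \<omega>)) \<le> 1" if "t \<in> T" "\<omega> \<in> space \<Omega>" for t \<omega>
    using that S norm_hip_steer_beam_le_1 by (auto simp: T_def V_def beam_of_coords_coord)
  have G_moments: "integrable \<Omega> (\<lambda>\<omega>. case_prod G t (\<lambda>i. coord i \<omega>))"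
      "(\<integral>\<omega>. case_prod G t (\<lambda>i. coord i \<omega>) \<partial>\<Omega>) = 0"
      "integrable \<Omega> (\<lambda>\<omega>. (cmod (case_prod G t (\<lambda>i. coord i \<omega>)))\<^sup>2)"
      "(\<integral>\<omega>. (cmod (case_prod G t (\<lambda>i. coord i \<omega>)))\<^sup>2 \<partial>\<Omega>) = case_prod \<sigma> t"
    if "t \<in> T" for t
    using that G_int G_mean G_sq_int G_var by (auto simp: T_def)
  show ?thesis
    unfolding T_def[symmetric] V_def[symmetric]
    by unfold_locales (rule indep_coord \<open>finite T\<close> BG_index BV_index disj_G disj_GV G' V' V_le G_moments; assumption)+
qed

lemma beamformed_sum_second_moment_le:
  fixes G :: "nat \<Rightarrow> nat \<Rightarrow> ((nat \<times> nat \<times> nat) \<times> bool \<Rightarrow> complex) \<Rightarrow> complex"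
    and BG :: "nat \<Rightarrow> nat \<Rightarrow> ((nat \<times> nat \<times> nat) \<times> bool) set" and \<sigma> :: "nat \<Rightarrow> nat \<Rightarrow> real"
  assumes "j < K" "k < K" "S \<subseteq> A j"
    and BG: "\<And>m l. m \<in> S \<Longrightarrow> l < L \<Longrightarrow> BG m l \<subseteq> {((m, k, l), True), ((m, k, l), False)} - beam_block m j"
    and G: "\<And>m l. m \<in> S \<Longrightarrow> l < L \<Longrightarrow> borel_of_coords (BG m l) (G m l)"
    and G_int: "\<And>m l. m \<in> S \<Longrightarrow> l < L \<Longrightarrow> integrable \<Omega> (\<lambda>\<omega>. G m l (\<lambda>t. coord t \<omega>))"
    and G_mean: "\<And>m l. m \<in> S \<Longrightarrow> l < L \<Longrightarrow> (\<integral>\<omega>. G m l (\<lambda>t. coord t \<omega>) \<partial>\<Omega>) = 0"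
    and G_sq_int: "\<And>m l. m \<in> S \<Longrightarrow> l < L \<Longrightarrow> integrable \<Omega> (\<lambda>\<omega>. (cmod (G m l (\<lambda>t. coord t \<omega>)))\<^sup>2)"
    and G_var: "\<And>m l. m \<in> S \<Longrightarrow> l < L \<Longrightarrow> (\<integral>\<omega>. (cmod (G m l (\<lambda>t. coord t \<omega>)))\<^sup>2 \<partial>\<Omega>) = \<sigma> m l"
  defines "X \<equiv> \<lambda>\<omega>. \<Sum>m\<in>S. complex_of_real (sqrt (p m)) *
             hip N (mpchan N L (\<beta> m k) (\<kappa> m k) (\<theta> m k) (\<lambda>l. G m l (\<lambda>t. coord t \<omega>))) (w m j \<omega>)"
  shows "integrable \<Omega> (\<lambda>\<omega>. (cmod (X \<omega>))\<^sup>2)"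
    and "(\<integral>\<omega>. (cmod (X \<omega>))\<^sup>2 \<partial>\<Omega>) \<le> (\<Sum>m\<in>S. p m * \<beta> m k * real N * (\<Sum>l<L. \<kappa> m k l * \<sigma> m l))"
proof -
  interpret F: indep_centred_terms \<Omega> coord coord_index "S \<times> {..<L}" "\<lambda>(m, l). BG m l" "\<lambda>(m, l). beam_block m j"
      "\<lambda>(m, l). G m l" "\<lambda>(m, l) x. hip N (steer N (\<theta> m k l)) (beam_of_coords m j x)" "\<lambda>(m, l). \<sigma> m l"
    by (rule indep_centred_terms_paths[OF assms(1-9)])
  define c where "c = (\<lambda>(m, l). complex_of_real (sqrt (p m) * (sqrt (\<beta> m k * real N) * sqrt (\<kappa> m k l))))"
  have X_eq: "X = (\<lambda>\<omega>. \<Sum>t\<in>S \<times> {..<L}. c t * F.summand t \<omega>)"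
    unfolding F.summand_def unfolding X_def hip_mpchan c_def
    by (simp add: sum_distrib_left sum.cartesian_product case_prod_beta beam_of_coords_coord mult.assoc)
  have c_sq: "(cmod (c (m, l)))\<^sup>2 = p m * \<beta> m k * real N * \<kappa> m k l" if "m \<in> S" "l < L" for m l
  proof -
    have "m < M"
      using that \<open>S \<subseteq> A j\<close> clusters_subset[OF \<open>j < K\<close>] by auto
    then show ?thesis
      using \<open>l < L\<close> \<open>k < K\<close> large_scale_nonneg path_weight_nonneg power_nonneg
      by (simp add: c_def p_eq norm_mult power_mult_distrib)
  qed
  have "(\<Sum>t\<in>S \<times> {..<L}. (cmod (c t))\<^sup>2 * (\<lambda>(m, l). \<sigma> m l) t)
      = (\<Sum>m\<in>S. p m * \<beta> m k * real N * (\<Sum>l<L. \<kappa> m k l * \<sigma> m l))"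
    unfolding sum_distrib_left sum.cartesian_product
    by (intro sum.cong refl) (auto simp: c_sq mult.assoc)
  with F.second_moment_sum_le[of c] show "integrable \<Omega> (\<lambda>\<omega>. (cmod (X \<omega>))\<^sup>2)"
    and "(\<integral>\<omega>. (cmod (X \<omega>))\<^sup>2 \<partial>\<Omega>) \<le> (\<Sum>m\<in>S. p m * \<beta> m k * real N * (\<Sum>l<L. \<kappa> m k l * \<sigma> m l))"
    unfolding X_eq by simp_all
qed

lemma gain_beamformed_sum_second_moment_le:
  assumes "j < K" "k < K" "S \<subseteq> A j" and k_not_zero_forced: "\<And>m. m \<in> S \<Longrightarrow> k \<notin> ugroup K A m - {j}"
  defines "X \<equiv> \<lambda>\<omega>. \<Sum>m\<in>S. complex_of_real (sqrt (p m)) * hip N (h m k \<omega>) (w m j \<omega>)"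
  shows "integrable \<Omega> (\<lambda>\<omega>. (cmod (X \<omega>))\<^sup>2)"
    and "(\<integral>\<omega>. (cmod (X \<omega>))\<^sup>2 \<partial>\<Omega>) \<le> (\<Sum>m\<in>S. p m * \<beta> m k * real N)"
proof -
  have S: "m < M" if "m \<in> S" for m
    using that \<open>S \<subseteq> A j\<close> clusters_subset[OF \<open>j < K\<close>] by auto
  define G where "G m l x = x ((m, k, l), True) + x ((m, k, l), False)"
    for m l :: nat and x :: "(nat \<times> nat \<times> nat) \<times> bool \<Rightarrow> complex"
  have G_coord: "G m l (\<lambda>t. coord t \<omega>) = g m k l \<omega>" for m l \<omega>
    by (simp add: G_def)
  have X_eq: "X = (\<lambda>\<omega>. \<Sum>m\<in>S. complex_of_real (sqrt (p m)) *
      hip N (mpchan N L (\<beta> m k) (\<kappa> m k) (\<theta> m k) (\<lambda>l. G m l (\<lambda>t. coord t \<omega>))) (w m j \<omega>))"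
    by (simp add: X_def h_eq G_coord)
  have moments: "integrable \<Omega> (g m k l)" "(\<integral>\<omega>. g m k l \<omega> \<partial>\<Omega>) = 0"
      "integrable \<Omega> (\<lambda>\<omega>. (cmod (g m k l \<omega>))\<^sup>2)" "(\<integral>\<omega>. (cmod (g m k l \<omega>))\<^sup>2 \<partial>\<Omega>) = 1"
    if "m \<in> S" "l < L" for m l
    using cgauss_moments[OF gain_cgauss[OF S[OF \<open>m \<in> S\<close>] \<open>k < K\<close> \<open>l < L\<close>]] by simp_all
  have "borel_of_coords {((m, k, l), True), ((m, k, l), False)} (G m l)" for m l
    unfolding G_def by (intro borel_of_coords_add borel_of_coords_component) auto
  with moments k_not_zero_forced
  have "integrable \<Omega> (\<lambda>\<omega>. (cmod (X \<omega>))\<^sup>2) \<and>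
      (\<integral>\<omega>. (cmod (X \<omega>))\<^sup>2 \<partial>\<Omega>) \<le> (\<Sum>m\<in>S. p m * \<beta> m k * real N * (\<Sum>l<L. \<kappa> m k l * 1))"
    unfolding X_eq using assms(1-3)
    by (intro conjI beamformed_sum_second_moment_le[where BG = "\<lambda>m l. {((m, k, l), True), ((m, k, l), False)}"])
       (auto simp: G_coord beam_block_def)
  moreover have "(\<Sum>m\<in>S. p m * \<beta> m k * real N * (\<Sum>l<L. \<kappa> m k l * 1)) = (\<Sum>m\<in>S. p m * \<beta> m k * real N)"
    using S path_weight_sum \<open>k < K\<close> by simp
  ultimately show "integrable \<Omega> (\<lambda>\<omega>. (cmod (X \<omega>))\<^sup>2)"
    and "(\<integral>\<omega>. (cmod (X \<omega>))\<^sup>2 \<partial>\<Omega>) \<le> (\<Sum>m\<in>S. p m * \<beta> m k * real N)"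
    by simp_all
qed

lemma error_beamformed_sum_second_moment_le:
  assumes "j < K" "k < K" "S \<subseteq> A j \<inter> A k"
  defines "X \<equiv> \<lambda>\<omega>. \<Sum>m\<in>S. complex_of_real (sqrt (p m)) *
             hip N (mpchan N L (\<beta> m k) (\<kappa> m k) (\<theta> m k) (\<lambda>l. \<Delta> m k l \<omega>)) (w m j \<omega>)"
  shows "integrable \<Omega> (\<lambda>\<omega>. (cmod (X \<omega>))\<^sup>2)"
    and "(\<integral>\<omega>. (cmod (X \<omega>))\<^sup>2 \<partial>\<Omega>) \<le>
      (\<Sum>m\<in>S. p m * \<beta> m k * real N * (\<Sum>l<L. \<kappa> m k l * 2 powr (- b m k l)))"
proof -
  have S: "m < M" "m \<in> A k" if "m \<in> S" for m
    using that \<open>S \<subseteq> A j \<inter> A k\<close> clusters_subset[OF \<open>j < K\<close>] by auto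
  define G where "G m l x = x ((m, k, l), True)" for m l :: nat and x :: "(nat \<times> nat \<times> nat) \<times> bool \<Rightarrow> complex"
  have G_coord: "G m l (\<lambda>t. coord t \<omega>) = \<Delta> m k l \<omega>" if "m \<in> S" for m l \<omega>
    using S(2)[OF that] by (simp add: G_def quant_error_def)
  have X_eq: "X = (\<lambda>\<omega>. \<Sum>m\<in>S. complex_of_real (sqrt (p m)) *
      hip N (mpchan N L (\<beta> m k) (\<kappa> m k) (\<theta> m k) (\<lambda>l. G m l (\<lambda>t. coord t \<omega>))) (w m j \<omega>))"
    by (simp add: X_def G_coord cong: sum.cong)
  have moments: "integrable \<Omega> (\<Delta> m k l)" "(\<integral>\<omega>. \<Delta> m k l \<omega> \<partial>\<Omega>) = 0"
      "integrable \<Omega> (\<lambda>\<omega>. (cmod (\<Delta> m k l \<omega>))\<^sup>2)" "(\<integral>\<omega>. (cmod (\<Delta> m k l \<omega>))\<^sup>2 \<partial>\<Omega>) = 2 powr (- b m k l)"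
    if "m \<in> S" "l < L" for m l
    using cgauss_moments[OF error_cgauss[OF S(1)[OF \<open>m \<in> S\<close>] \<open>k < K\<close> \<open>l < L\<close> S(2)[OF \<open>m \<in> S\<close>]]]
    by simp_all
  have "borel_of_coords {((m, k, l), True)} (G m l)" for m l
    unfolding G_def by (intro borel_of_coords_component) auto
  with moments show "integrable \<Omega> (\<lambda>\<omega>. (cmod (X \<omega>))\<^sup>2)"
    and "(\<integral>\<omega>. (cmod (X \<omega>))\<^sup>2 \<partial>\<Omega>) \<le>
      (\<Sum>m\<in>S. p m * \<beta> m k * real N * (\<Sum>l<L. \<kappa> m k l * 2 powr (- b m k l)))"
    unfolding X_eq using assms(1-3)
    by (intro beamformed_sum_second_moment_le[where BG = "\<lambda>m l. {((m, k, l), True)}"];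
        auto simp: G_coord beam_block_def)+
qed

text \<open>Zero forcing removes the quantized part of the channel, leaving only the quantization error.\<close>
lemma hip_channel_beam_eq_error:
  assumes "m \<in> A j" "m \<in> A k" "j < K" "k < K" "j \<noteq> k" "\<omega> \<in> space \<Omega>"
  shows "hip N (h m k \<omega>) (w m j \<omega>) = hip N (mpchan N L (\<beta> m k) (\<kappa> m k) (\<theta> m k) (\<lambda>l. \<Delta> m k l \<omega>)) (w m j \<omega>)"
proof -
  have "h m k \<omega> = (\<lambda>n. hq m k \<omega> n + mpchan N L (\<beta> m k) (\<kappa> m k) (\<theta> m k) (\<lambda>l. \<Delta> m k l \<omega>) n)"
    unfolding h_eq hq_eq by (rule ext, rule mpchan_split)
  moreover have "hip N (hq m k \<omega>) (w m j \<omega>) = 0"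
    using assms clusters_subset by (intro zero_forcing) (auto simp: in_ugroup_iff)
  ultimately show ?thesis
    by (simp add: hip_add_left)
qed

lemma expected_desired_signal_le:
  assumes "k < K"
  shows "(\<integral>\<^sup>+\<omega>. ennreal (sigD N A p h w k \<omega>) \<partial>\<Omega>) \<le> ennreal (\<Sum>m\<in>A k. p m * \<beta> m k * real N)"
  using gain_beamformed_sum_second_moment_le[OF assms assms order_refl]
  unfolding sigD_def by (intro nn_integral_le_of_integral_le) auto

lemma expected_inter_group_interference_le:
  assumes "k < K"
  shows "(\<integral>\<^sup>+\<omega>. ennreal (sigIGI K N A p h w k \<omega>) \<partial>\<Omega>)
    \<le> ennreal (\<Sum>j\<in>{..<K} - {k}. \<Sum>m\<in>A j - A k. p m * \<beta> m k * real N)"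
  using gain_beamformed_sum_second_moment_le[OF _ assms Diff_subset]
  unfolding sigIGI_def by (intro nn_integral_sum_le_of_integral_le) (auto simp: in_ugroup_iff)

lemma expected_same_group_interference_le:
  assumes "k < K"
  shows "(\<integral>\<^sup>+\<omega>. ennreal (sigSGI K N A p h w k \<omega>) \<partial>\<Omega>)
    \<le> ennreal (\<Sum>j\<in>{..<K} - {k}. \<Sum>m\<in>A j \<inter> A k.
         p m * \<beta> m k * real N * (\<Sum>l<L. \<kappa> m k l * 2 powr (- b m k l)))"
proof -
  have "(\<integral>\<^sup>+\<omega>. ennreal (sigSGI K N A p h w k \<omega>) \<partial>\<Omega>) = (\<integral>\<^sup>+\<omega>. ennreal (\<Sum>j\<in>{..<K} - {k}.
      (cmod (\<Sum>m\<in>A j \<inter> A k. complex_of_real (sqrt (p m)) *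
        hip N (mpchan N L (\<beta> m k) (\<kappa> m k) (\<theta> m k) (\<lambda>l. \<Delta> m k l \<omega>)) (w m j \<omega>)))\<^sup>2) \<partial>\<Omega>)"
    unfolding sigSGI_def using assms
    by (intro nn_integral_cong arg_cong[where f = ennreal] sum.cong refl arg_cong[where f = "\<lambda>z. (cmod z)\<^sup>2"])
       (simp add: hip_channel_beam_eq_error)
  also have "\<dots> \<le> ennreal (\<Sum>j\<in>{..<K} - {k}. \<Sum>m\<in>A j \<inter> A k.
         p m * \<beta> m k * real N * (\<Sum>l<L. \<kappa> m k l * 2 powr (- b m k l)))"
    using error_beamformed_sum_second_moment_le[OF _ assms order_refl]
    by (intro nn_integral_sum_le_of_integral_le) auto
  finally show ?thesis .
qed

end

theorem lemma3:
  fixes \<Omega> :: "'w measure" and M K N L k :: nat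
    and A :: "nat \<Rightarrow> nat set"
    and \<beta> :: "nat \<Rightarrow> nat \<Rightarrow> real"
    and \<kappa> \<theta> b :: "nat \<Rightarrow> nat \<Rightarrow> nat \<Rightarrow> real"
    and g \<Delta> :: "nat \<Rightarrow> nat \<Rightarrow> nat \<Rightarrow> 'w \<Rightarrow> complex"
    and P :: "nat \<Rightarrow> real"
    and W :: "nat \<Rightarrow> nat \<Rightarrow> (nat \<Rightarrow> nat \<Rightarrow> complex) \<Rightarrow> nat \<Rightarrow> complex"
  defines "U \<equiv> ugroup K A"
    and "p \<equiv> (\<lambda>m. P m / real (card (ugroup K A m)))"
    and "h \<equiv> (\<lambda>m k \<omega>. mpchan N L (\<beta> m k) (\<kappa> m k) (\<theta> m k) (\<lambda>l. g m k l \<omega>))"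
    and "hq \<equiv> (\<lambda>m k \<omega>. mpchan N L (\<beta> m k) (\<kappa> m k) (\<theta> m k) (\<lambda>l. g m k l \<omega> - \<Delta> m k l \<omega>))"
    and "w \<equiv> (\<lambda>m j \<omega>. W m j (\<lambda>i. if i \<in> ugroup K A m - {j} then mpchan N L (\<beta> m i) (\<kappa> m i) (\<theta> m i) (\<lambda>l. g m i l \<omega> - \<Delta> m i l \<omega>) else (\<lambda>_. 0)))"
  assumes "prob_space \<Omega>"
    and "N \<ge> 1"
    and "k < K"
    and "\<forall>k'<K. A k' \<subseteq> {..<M}"
    and "\<forall>m<M. \<forall>k'<K. \<beta> m k' \<ge> 0"
    and "\<forall>m<M. \<forall>k'<K. \<forall>l<L. 0 \<le> \<kappa> m k' l \<and> \<kappa> m k' l \<le> 1"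
    and "\<forall>m<M. \<forall>k'<K. (\<Sum>l<L. \<kappa> m k' l) = 1"
    and "\<forall>m<M. \<forall>k'<K. \<forall>l<L. b m k' l \<ge> 0"
    and "\<forall>m<M. P m \<ge> 0"
    and "\<forall>m<M. \<forall>k'<K. \<forall>l<L. cgauss \<Omega> 1 (g m k' l)"
    and "\<forall>m<M. \<forall>k'<K. \<forall>l<L. m \<in> A k' \<longrightarrow> cgauss \<Omega> (2 powr (- b m k' l)) (\<Delta> m k' l)"
    and "\<forall>m<M. \<forall>k'<K. \<forall>l<L. m \<in> A k' \<longrightarrow>
           prob_space.indep_var \<Omega> borel (\<Delta> m k' l) borel (\<lambda>\<omega>. g m k' l \<omega> - \<Delta> m k' l \<omega>)"
    and "prob_space.indep_vars \<Omega> (\<lambda>_. borel)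
           (\<lambda>(m, k', l) \<omega>. (g m k' l \<omega>, if m \<in> A k' then \<Delta> m k' l \<omega> else 0))
           ({..<M} \<times> {..<K} \<times> {..<L})"
    and "\<forall>m<M. \<forall>j\<in>U m.
           W m j \<in> measurable (Pi\<^sub>M UNIV (\<lambda>_. Pi\<^sub>M UNIV (\<lambda>_. borel))) (Pi\<^sub>M UNIV (\<lambda>_. borel))"
    and "\<forall>m<M. \<forall>j\<in>U m. \<forall>\<omega>\<in>space \<Omega>. (\<Sum>n<N. (cmod (w m j \<omega> n))\<^sup>2) = 1"
    and "\<forall>m<M. \<forall>j\<in>U m. \<forall>i\<in>U m - {j}. \<forall>\<omega>\<in>space \<Omega>. hip N (hq m i \<omega>) (w m j \<omega>) = 0"
  shows "(\<integral>\<^sup>+\<omega>. ennreal (sigD N A p h w k \<omega>) \<partial>\<Omega>)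
           \<le> ennreal (\<Sum>m\<in>A k. p m * \<beta> m k * real N)
       \<and> (\<integral>\<^sup>+\<omega>. ennreal (sigSGI K N A p h w k \<omega>) \<partial>\<Omega>)
           \<le> ennreal (\<Sum>j\<in>{..<K} - {k}. \<Sum>m\<in>A j \<inter> A k.
                 p m * \<beta> m k * real N * (\<Sum>l<L. \<kappa> m k l * 2 powr (- b m k l)))
       \<and> (\<integral>\<^sup>+\<omega>. ennreal (sigIGI K N A p h w k \<omega>) \<partial>\<Omega>)
           \<le> ennreal (\<Sum>j\<in>{..<K} - {k}. \<Sum>m\<in>A j - A k. p m * \<beta> m k * real N)"
proof -
  interpret cell_free_downlink \<Omega> M K N L A \<beta> \<kappa> \<theta> b g \<Delta> P W p h hq w
    by (intro cell_free_downlink.intro cell_free_downlink_axioms.intro assms(6,7)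
        p_def[THEN meta_eq_to_obj_eq] h_def[THEN meta_eq_to_obj_eq] hq_def[THEN meta_eq_to_obj_eq]
        w_def[THEN meta_eq_to_obj_eq] assms(9,10,12,14-21)[unfolded U_def, rule_format]
        conjunct1[OF assms(11)[rule_format]])
  show ?thesis
    using expected_desired_signal_le expected_same_group_interference_le
      expected_inter_group_interference_le \<open>k < K\<close>
    by blast
qed

end
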